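(* Let $\mathbb{K}$ be a field of characteristic $0$. Suppose $H^*$ is a $2n$-dimensional Poincaré graded (commutative) algebra over $\mathbb{K}$ with $H^0=\mathbb{K}$, and $H^i$ is nontrivial only when $i$ is even and $0\le i\le 2n$. If the multiplication map $H^i\otimes H^j\to H^{i+j}$ is injective for all $i,j\le n$, then $H^*\cong\mathbb{K}[x]/(x^p)$ is a quotient of the polynomial ring in a single (homogeneous) variable.
   Context: A finite-dimensional graded commutative algebra $H$ is $m$-dimensional Poincaré if there exists $\alpha_H\in(H^m)^\vee$ such that $H^i\to(H^{m-i})^\vee$, $x\mapsto(y\mapsto\alpha_H(xy))$, is an isomorphism for all $i$. *)

theory Defs
  imports Main "HOL-Computational_Algebra.Polynomial"
begin

definition k_algebra :: "('k::field \<Rightarrow> 'a::comm_ring_1 \<Rightarrow> 'a) \<Rightarrow> bool" where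
  "k_algebra scale \<longleftrightarrow> vector_space scale \<and> (\<forall>c x y. scale c (x * y) = scale c x * y)"

definition fin_graded_algebra :: "('k::field \<Rightarrow> 'a::comm_ring_1 \<Rightarrow> 'a) \<Rightarrow> (nat \<Rightarrow> 'a set) \<Rightarrow> bool" where
  "fin_graded_algebra scale H \<longleftrightarrow>
     k_algebra scale \<and>
     (\<forall>i. module.subspace scale (H i)) \<and>
     (\<forall>i. \<exists>B. finite B \<and> B \<subseteq> H i \<and> module.span scale B = H i) \<and>
     (\<exists>N. \<forall>i>N. H i = {0}) \<and>
     (\<forall>x. \<exists>!f. (\<forall>i. f i \<in> H i) \<and> finite {i. f i \<noteq> 0} \<and> x = sum f {i. f i \<noteq> 0}) \<and>
     1 \<in> H 0 \<and>
     (\<forall>i j. \<forall>x\<in>H i. \<forall>y\<in>H j. x * y \<in> H (i + j))"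

text \<open>Linear functionals on a subspace V (elements of the dual space V^\<or>,
identified when they agree on V).\<close>

definition lin_functional :: "('k::field \<Rightarrow> 'a::comm_ring_1 \<Rightarrow> 'a) \<Rightarrow> 'a set \<Rightarrow> ('a \<Rightarrow> 'k) \<Rightarrow> bool" where
  "lin_functional scale V \<phi> \<longleftrightarrow>
     (\<forall>x\<in>V. \<forall>y\<in>V. \<phi> (x + y) = \<phi> x + \<phi> y) \<and> (\<forall>c. \<forall>x\<in>V. \<phi> (scale c x) = c * \<phi> x)"

text \<open>m-dimensional Poincare: there is alpha in (H^m)^\<or> such that for every degree i
the (linear) map H^i \<rightarrow> (H^(m-i))^\<or>, x \<mapsto> (y \<mapsto> alpha(xy)) is bijective. For i > m the
target is the dual of the zero space, so this says H i = 0.\<close>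

definition poincare :: "('k::field \<Rightarrow> 'a::comm_ring_1 \<Rightarrow> 'a) \<Rightarrow> (nat \<Rightarrow> 'a set) \<Rightarrow> nat \<Rightarrow> bool" where
  "poincare scale H m \<longleftrightarrow>
     (\<exists>\<alpha>. lin_functional scale (H m) \<alpha> \<and>
        (\<forall>i>m. H i = {0}) \<and>
        (\<forall>i\<le>m.
           (\<forall>x\<in>H i. (\<forall>y\<in>H (m - i). \<alpha> (x * y) = 0) \<longrightarrow> x = 0) \<and>
           (\<forall>\<phi>. lin_functional scale (H (m - i)) \<phi> \<longrightarrow>
                 (\<exists>x\<in>H i. \<forall>y\<in>H (m - i). \<phi> y = \<alpha> (x * y)))))"

text \<open>Injectivity of the multiplication map H^i \<otimes> H^j \<rightarrow> H^(i+j). Its image is the span of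
all products x*y, and the source has dimension dim H^i * dim H^j, so (finite
dimensions) injectivity means the image has that dimension.\<close>

definition mult_injective :: "('k::field \<Rightarrow> 'a::comm_ring_1 \<Rightarrow> 'a) \<Rightarrow> (nat \<Rightarrow> 'a set) \<Rightarrow> nat \<Rightarrow> nat \<Rightarrow> bool" where
  "mult_injective scale H i j \<longleftrightarrow>
     vector_space.dim scale (module.span scale {x * y | x y. x \<in> H i \<and> y \<in> H j})
       = vector_space.dim scale (H i) * vector_space.dim scale (H j)"

definition poly_eval :: "('k::field \<Rightarrow> 'a::comm_ring_1 \<Rightarrow> 'a) \<Rightarrow> 'a \<Rightarrow> 'k poly \<Rightarrow> 'a" where
  "poly_eval scale x f = (\<Sum>i\<le>degree f. scale (coeff f i) (x ^ i))"

end

theory Submission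
  imports Defs
begin

text \<open>For independent \<open>u, v \<in> H\<^sup>i\<close>, \<open>u \<otimes> v - v \<otimes> u\<close> is a nonzero element of the kernel of
  \<open>H\<^sup>i \<otimes> H\<^sup>i \<rightarrow> H\<^bsup>2i\<^esup>\<close>; so every \<open>H\<^sup>i\<close> with \<open>i \<le> n\<close> is zero or a line, and by the nondegeneracy of the
  Poincare pairing so is every \<open>H\<^sup>i\<close>. Products of nonzero classes are then nonzero when both
  degrees are at most \<open>n\<close> (injectivity) or when the degrees are complementary (the pairing).
  Hence the set \<open>S\<close> of degrees \<open>i\<close> with \<open>H\<^sup>i \<noteq> 0\<close> contains \<open>0\<close>, is invariant under \<open>i \<mapsto> 2n - i\<close> and
  contains \<open>i + j\<close> whenever \<open>i, j \<in> S\<close> are at most \<open>n\<close>. Such a set consists of the multiples of its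
  least positive element \<open>d\<close> up to \<open>2n\<close>. A nonzero \<open>x \<in> H\<^sup>d\<close> then has \<open>x\<^sup>k \<noteq> 0\<close> exactly for
  \<open>kd \<le> 2n\<close>, and these powers span \<open>H\<close>, so that \<open>H = K[x]/(x\<^sup>p)\<close> with \<open>p = 2n/d + 1\<close>.\<close>

lemma reflection_sum_closed_eq_multiples:
  fixes T :: "nat set" and N d :: nat
  assumes reflect: "\<And>a. a \<in> T \<Longrightarrow> a \<le> N \<and> N - a \<in> T"
    and add: "\<And>a b. a \<in> T \<Longrightarrow> b \<in> T \<Longrightarrow> a + b \<le> N \<Longrightarrow> a + b \<in> T"
    and "d \<in> T" "0 < d" and least: "\<And>a. a \<in> T \<Longrightarrow> 0 < a \<Longrightarrow> d \<le> a"
  shows "a \<in> T \<longleftrightarrow> a \<le> N \<and> d dvd a"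
proof -
  have diff: "c - a \<in> T" if "a \<in> T" "c \<in> T" "a \<le> c" for a c
  proof -
    have "N - c + a \<in> T" using that reflect[of c] add[of "N - c" a] by auto
    then have "N - (N - c + a) \<in> T" using reflect by blast
    moreover have "N - (N - c + a) = c - a" using that reflect[of c] by auto
    ultimately show ?thesis by simp
  qed
  have "d \<le> N" "N - d \<in> T" using reflect \<open>d \<in> T\<close> by auto
  then have "0 \<in> T" using diff[of "N - d" "N - d"] by auto
  have multiple: "k * d \<in> T" if "k * d \<le> N" for k
    using that
  proof (induction k)
    case 0
    show ?case using \<open>0 \<in> T\<close> by simp
  next
    case (Suc k)
    then show ?case using add[of "k * d" d] \<open>d \<in> T\<close> by (simp add: add.commute)
  qed
  have "d dvd a" if "a \<in> T" for a
  proof -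
    have "a div d * d \<in> T"
      using multiple reflect[OF that] div_times_less_eq_dividend[of a d] by (meson le_trans)
    then have "a - a div d * d \<in> T" using diff[OF _ that] by simp
    then have "a mod d \<in> T" by (simp add: minus_div_mult_eq_mod)
    then have "a mod d = 0" using least[of "a mod d"] \<open>0 < d\<close> by (meson mod_less_divisor not_gr0 not_le)
    then show ?thesis by (simp add: mod_eq_0_iff_dvd)
  qed
  then show ?thesis using reflect multiple by (auto simp: mult.commute)
qed

text \<open>Take \<open>N = 2n - m\<close> with \<open>m\<close> the largest element of \<open>S\<close> not exceeding \<open>n\<close>: by the
  symmetry, \<open>S\<close> has no element strictly between \<open>n\<close> and \<open>N\<close>, so two positive elements of \<open>S\<close>
  with sum at most \<open>N\<close> are both at most \<open>n\<close>.\<close>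

lemma symmetric_low_sum_closed_initial_segment:
  fixes S :: "nat set" and n :: nat
  assumes "0 \<in> S" and reflect: "\<And>i. i \<in> S \<Longrightarrow> i \<le> 2 * n \<and> 2 * n - i \<in> S"
    and add: "\<And>i j. i \<in> S \<Longrightarrow> j \<in> S \<Longrightarrow> i \<le> n \<Longrightarrow> j \<le> n \<Longrightarrow> i + j \<in> S"
  obtains N where "n \<le> N" "N \<in> S"
    and "\<And>a. a \<in> S \<Longrightarrow> a \<le> N \<Longrightarrow> N - a \<in> S"
    and "\<And>a b. a \<in> S \<Longrightarrow> b \<in> S \<Longrightarrow> a + b \<le> N \<Longrightarrow> a + b \<in> S"
proof
  define m where "m = Max {i \<in> S. i \<le> n}"
  have fin: "finite {i \<in> S. i \<le> n}" by simp
  have "m \<in> {i \<in> S. i \<le> n}" unfolding m_def using fin \<open>0 \<in> S\<close> by (intro Max_in) auto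
  then have "m \<in> S" "m \<le> n" by auto
  have m_max: "i \<le> m" if "i \<in> S" "i \<le> n" for i
    unfolding m_def using fin that by (intro Max_ge) auto
  define N where "N = 2 * n - m"
  have low: "i \<le> n" if "i \<in> S" "i < N" for i
  proof (rule ccontr)
    assume "\<not> i \<le> n"
    then have "2 * n - i \<le> m" using reflect[OF that(1)] m_max[of "2 * n - i"] by auto
    then show False using \<open>i < N\<close> unfolding N_def by linarith
  qed
  show "n \<le> N" using \<open>m \<le> n\<close> unfolding N_def by simp
  show "N \<in> S" using reflect \<open>m \<in> S\<close> unfolding N_def by blast
  show "N - a \<in> S" if "a \<in> S" "a \<le> N" for a
  proof (cases "a = 0 \<or> a = N")
    case True
    then show ?thesis using \<open>N \<in> S\<close> \<open>0 \<in> S\<close> by auto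
  next
    case False
    with that low have "0 < a" "a \<le> n" by auto
    then have "m + a \<in> S" "n < m + a"
      using add[of m a] m_max[of "m + a"] \<open>a \<in> S\<close> \<open>m \<in> S\<close> \<open>m \<le> n\<close> by force+
    then have "2 * n - (m + a) \<in> S" using reflect by blast
    then show ?thesis unfolding N_def by simp
  qed
  show "a + b \<in> S" if "a \<in> S" "b \<in> S" "a + b \<le> N" for a b
  proof (cases "a = 0 \<or> b = 0")
    case True
    then show ?thesis using that by auto
  next
    case False
    then have "a \<le> n" "b \<le> n" using low that by auto
    then show ?thesis using add that by blast
  qed
qed

lemma symmetric_low_sum_closed_eq_multiples:
  fixes S :: "nat set" and n d :: nat
  assumes "0 \<in> S" and reflect: "\<And>i. i \<in> S \<Longrightarrow> i \<le> 2 * n \<and> 2 * n - i \<in> S"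
    and add: "\<And>i j. i \<in> S \<Longrightarrow> j \<in> S \<Longrightarrow> i \<le> n \<Longrightarrow> j \<le> n \<Longrightarrow> i + j \<in> S"
    and "d \<in> S" "0 < d" and least: "\<And>i. i \<in> S \<Longrightarrow> 0 < i \<Longrightarrow> d \<le> i"
  shows "i \<in> S \<longleftrightarrow> i \<le> 2 * n \<and> d dvd i"
proof -
  obtain N where "n \<le> N" "N \<in> S"
    and S_reflect: "\<And>a. a \<in> S \<Longrightarrow> a \<le> N \<Longrightarrow> N - a \<in> S"
    and S_add: "\<And>a b. a \<in> S \<Longrightarrow> b \<in> S \<Longrightarrow> a + b \<le> N \<Longrightarrow> a + b \<in> S"
    using symmetric_low_sum_closed_initial_segment[OF \<open>0 \<in> S\<close> reflect add] by blast
  have "N \<le> 2 * n" using reflect \<open>N \<in> S\<close> by blast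
  have "0 < N" using reflect[OF \<open>d \<in> S\<close>] \<open>0 < d\<close> \<open>n \<le> N\<close> by linarith
  then have "d \<le> N" using least \<open>N \<in> S\<close> by blast
  have initial_segment: "a \<in> S \<longleftrightarrow> a \<le> N \<and> d dvd a" if "a \<le> N" for a
    using reflection_sum_closed_eq_multiples[of "{a \<in> S. a \<le> N}" N d a] \<open>d \<in> S\<close> \<open>d \<le> N\<close> \<open>0 < d\<close>
      S_reflect S_add least that
    by auto
  have "2 * n - N \<in> S" using reflect \<open>N \<in> S\<close> by blast
  then have "d dvd 2 * n - N" "d dvd N" using initial_segment \<open>n \<le> N\<close> \<open>N \<in> S\<close> by auto
  then have "d dvd 2 * n" using \<open>N \<le> 2 * n\<close> by (metis dvd_add le_add_diff_inverse2)
  show ?thesis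
  proof (cases "i \<le> N")
    case True
    then show ?thesis using initial_segment \<open>N \<le> 2 * n\<close> by auto
  next
    case False
    then have "2 * n - i \<le> N" using \<open>n \<le> N\<close> by linarith
    then have "2 * n - i \<in> S \<longleftrightarrow> d dvd 2 * n - i" using initial_segment by auto
    moreover have "i \<in> S \<longleftrightarrow> i \<le> 2 * n \<and> 2 * n - i \<in> S"
      using reflect[of i] reflect[of "2 * n - i"] by auto
    moreover have "d dvd 2 * n - i \<longleftrightarrow> d dvd i" if "i \<le> 2 * n"
      using dvd_diff_nat[OF \<open>d dvd 2 * n\<close>, of i] dvd_diff_nat[OF \<open>d dvd 2 * n\<close>, of "2 * n - i"] that
      by auto
    ultimately show ?thesis by blast
  qed
qed

locale commutative_algebra =
  fixes scale :: "'k::field \<Rightarrow> 'a::comm_ring_1 \<Rightarrow> 'a"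
  assumes k_algebra: "k_algebra scale"
begin

sublocale vector_space scale
  using k_algebra unfolding k_algebra_def by blast

lemma scale_mult_left: "scale c x * y = scale c (x * y)"
  using k_algebra unfolding k_algebra_def by metis

lemma scale_mult_right: "x * scale c y = scale c (x * y)"
  using scale_mult_left[of c y x] by (simp add: mult.commute)

lemma poly_eval_eq_sum_lessThan:
  "degree f < N \<Longrightarrow> poly_eval scale x f = (\<Sum>i<N. scale (coeff f i) (x ^ i))"
  unfolding poly_eval_def by (rule sum.mono_neutral_left) (auto simp: coeff_eq_0)

lemma poly_eval_add: "poly_eval scale x (f + g) = poly_eval scale x f + poly_eval scale x g"
proof -
  define N where "N = Suc (max (degree f) (degree g))"
  have "degree f < N" "degree g < N" "degree (f + g) < N"
    using degree_add_le_max[of f g] unfolding N_def by auto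
  then show ?thesis
    by (simp add: poly_eval_eq_sum_lessThan scale_left_distrib sum.distrib)
qed

lemma poly_eval_smult: "poly_eval scale x (smult c f) = scale c (poly_eval scale x f)"
proof -
  define N where "N = Suc (degree f)"
  have "degree f < N" "degree (smult c f) < N" unfolding N_def by auto
  then show ?thesis by (simp add: poly_eval_eq_sum_lessThan scale_sum_right)
qed

lemma poly_eval_monom: "poly_eval scale x (monom c k) = scale c (x ^ k)"
proof -
  have "degree (monom c k) < Suc k" using degree_monom_le[of c k] by simp
  then have "poly_eval scale x (monom c k) = (\<Sum>i<Suc k. scale (coeff (monom c k) i) (x ^ i))"
    by (rule poly_eval_eq_sum_lessThan)
  also have "\<dots> = (\<Sum>i<Suc k. if k = i then scale c (x ^ i) else 0)"
    by (intro sum.cong refl) simp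
  also have "\<dots> = scale c (x ^ k)" by simp
  finally show ?thesis .
qed

lemma subspace_range_poly_eval: "subspace (range (poly_eval scale x))"
proof (rule subspaceI)
  have "0 = poly_eval scale x 0" unfolding poly_eval_def by simp
  then show "0 \<in> range (poly_eval scale x)" by (rule range_eqI)
next
  fix y z assume "y \<in> range (poly_eval scale x)" "z \<in> range (poly_eval scale x)"
  then obtain f g where "y = poly_eval scale x f" "z = poly_eval scale x g" by blast
  then have "y + z = poly_eval scale x (f + g)" by (simp add: poly_eval_add)
  then show "y + z \<in> range (poly_eval scale x)" by (rule range_eqI)
next
  fix c y assume "y \<in> range (poly_eval scale x)"
  then obtain f where "y = poly_eval scale x f" by blast
  then have "scale c y = poly_eval scale x (smult c f)" by (simp add: poly_eval_smult)
  then show "scale c y \<in> range (poly_eval scale x)" by (rule range_eqI)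
qed

lemma poly_eval_eq_0_iff:
  assumes "x ^ p = 0" and independent: "\<And>c. (\<Sum>k<p. scale (c k) (x ^ k)) = 0 \<Longrightarrow> \<forall>k<p. c k = 0"
  shows "poly_eval scale x f = 0 \<longleftrightarrow> monom 1 p dvd f"
proof -
  have vanish: "x ^ k = 0" if "p \<le> k" for k
  proof -
    have "x ^ k = x ^ p * x ^ (k - p)" using that by (simp flip: power_add)
    then show ?thesis by (simp add: assms(1))
  qed
  define N where "N = max (Suc (degree f)) p"
  have "poly_eval scale x f = (\<Sum>k<N. scale (coeff f k) (x ^ k))"
    by (rule poly_eval_eq_sum_lessThan) (simp add: N_def)
  also have "\<dots> = (\<Sum>k<p. scale (coeff f k) (x ^ k))"
    by (rule sum.mono_neutral_right) (auto simp: N_def vanish)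
  finally have eval: "poly_eval scale x f = (\<Sum>k<p. scale (coeff f k) (x ^ k))" .
  show ?thesis
  proof
    assume "poly_eval scale x f = 0"
    then show "monom 1 p dvd f" using independent[of "coeff f"] eval by (simp add: monom_1_dvd_iff')
  next
    assume "monom 1 p dvd f"
    then show "poly_eval scale x f = 0" using eval by (simp add: monom_1_dvd_iff')
  qed
qed

end

locale graded_algebra =
  fixes scale :: "'k::field \<Rightarrow> 'a::comm_ring_1 \<Rightarrow> 'a" and H :: "nat \<Rightarrow> 'a set"
  assumes graded: "fin_graded_algebra scale H"
begin

sublocale commutative_algebra scale
  using graded unfolding fin_graded_algebra_def by unfold_locales blast

lemma subspace_H: "subspace (H i)"
  using graded unfolding fin_graded_algebra_def by blast

lemma mult_mem_H: "x \<in> H i \<Longrightarrow> y \<in> H j \<Longrightarrow> x * y \<in> H (i + j)"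
  using graded unfolding fin_graded_algebra_def by blast

lemma one_mem_H0: "1 \<in> H 0"
  using graded unfolding fin_graded_algebra_def by blast

lemma zero_mem_H: "0 \<in> H i"
  using subspace_H by (rule subspace_0)

lemma add_mem_H: "x \<in> H i \<Longrightarrow> y \<in> H i \<Longrightarrow> x + y \<in> H i"
  using subspace_H by (rule subspace_add)

lemma scale_mem_H: "x \<in> H i \<Longrightarrow> scale c x \<in> H i"
  using subspace_H by (rule subspace_scale)

lemma power_mem_H: "x \<in> H d \<Longrightarrow> x ^ k \<in> H (k * d)"
  by (induction k) (auto simp: one_mem_H0 mult_mem_H)

lemma homogeneous_decomposition_unique:
  "\<exists>!F. (\<forall>i. F i \<in> H i) \<and> finite {i. F i \<noteq> 0} \<and> y = sum F {i. F i \<noteq> 0}"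
  using graded unfolding fin_graded_algebra_def by blast

lemma homogeneous_sum_eq_0:
  assumes "finite I" "\<And>i. i \<in> I \<Longrightarrow> F i \<in> H i" "sum F I = 0" "i \<in> I"
  shows "F i = 0"
proof -
  define decomposes_0 where
    "decomposes_0 G \<longleftrightarrow> (\<forall>i. G i \<in> H i) \<and> finite {i. G i \<noteq> 0} \<and> 0 = sum G {i. G i \<noteq> 0}"
    for G :: "nat \<Rightarrow> 'a"
  define G where "G i = (if i \<in> I then F i else 0)" for i
  have "{i. G i \<noteq> 0} \<subseteq> I" unfolding G_def by auto
  moreover have "sum G {i. G i \<noteq> 0} = sum F I"
    using assms(1) by (intro sum.mono_neutral_cong_left) (auto simp: G_def)
  ultimately have "decomposes_0 G"
    using assms(1-3) zero_mem_H finite_subset unfolding decomposes_0_def G_def by auto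
  moreover have "decomposes_0 (\<lambda>_. 0)" using zero_mem_H unfolding decomposes_0_def by simp
  moreover have "\<exists>!G. decomposes_0 G"
    using homogeneous_decomposition_unique[of 0] unfolding decomposes_0_def .
  ultimately have "G = (\<lambda>_. 0)" by blast
  then show ?thesis using assms(4) unfolding G_def by (metis (full_types))
qed

lemma finite_independent_H:
  assumes "independent B" "B \<subseteq> H i"
  shows "finite B"
proof -
  obtain B0 where "finite B0" "span B0 = H i"
    using graded unfolding fin_graded_algebra_def by blast
  then have "B \<subseteq> span B0" using assms(2) by simp
  then show ?thesis using independent_span_bound[OF \<open>finite B0\<close> assms(1)] by blast
qed

lemma basis_extension_H:
  assumes "independent A" "A \<subseteq> H i"
  obtains B where "A \<subseteq> B" "independent B" "span B = H i" "finite B" "card B = dim (H i)"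
proof -
  obtain B where B: "A \<subseteq> B" "B \<subseteq> H i" "independent B" "H i \<subseteq> span B"
    using maximal_independent_subset_extend assms by blast
  then have "span B = H i" using span_subspace subspace_H by blast
  moreover have "card B = dim (H i)" using B basis_card_eq_dim by blast
  ultimately show ?thesis using that B finite_independent_H by blast
qed

lemma H_eq_span_singleton:
  assumes "dim (H i) \<le> 1" "v \<in> H i" "v \<noteq> 0"
  shows "H i = span {v}"
proof -
  obtain B where "{v} \<subseteq> B" "span B = H i" "finite B" "card B = dim (H i)"
    using basis_extension_H[of "{v}" i] assms by auto
  moreover have "card B \<le> Suc 0" using assms(1) \<open>card B = dim (H i)\<close> by simp
  ultimately have "B = {v}" using card_le_Suc0_iff_eq by blast
  then show ?thesis using \<open>span B = H i\<close> by simp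
qed

lemma mult_mem_span_products:
  assumes "x \<in> span A" "y \<in> span B" "finite A" "finite B"
  shows "x * y \<in> span ((\<lambda>(a, b). a * b) ` (A \<times> B))"
proof -
  obtain u where u: "x = (\<Sum>a\<in>A. scale (u a) a)" using assms(1,3) span_finite by auto
  obtain v where v: "y = (\<Sum>b\<in>B. scale (v b) b)" using assms(2,4) span_finite by auto
  have "x * y = (\<Sum>a\<in>A. \<Sum>b\<in>B. scale (u a * v b) (a * b))"
    unfolding u v sum_product by (simp add: scale_mult_left scale_mult_right mult.commute)
  also have "\<dots> \<in> span ((\<lambda>(a, b). a * b) ` (A \<times> B))"
    by (intro span_sum span_scale span_base) auto
  finally show ?thesis .
qed

lemma mult_injective_products_of_bases:
  assumes "mult_injective scale H i j"
    and B: "independent B" "span B = H i" and C: "independent C" "span C = H j"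
  shows "inj_on (\<lambda>(b, c). b * c) (B \<times> C)" and "0 \<notin> (\<lambda>(b, c). b * c) ` (B \<times> C)"
proof -
  let ?Q = "(\<lambda>(b, c). b * c) ` (B \<times> C)"
  have "finite B" "finite C" using B C finite_independent_H span_superset by metis+
  then have fin: "finite (B \<times> C)" by simp
  have "{x * y | x y. x \<in> H i \<and> y \<in> H j} \<subseteq> span (?Q - {0})"
    using mult_mem_span_products \<open>finite B\<close> \<open>finite C\<close> B(2) C(2) by auto
  then have "dim (span {x * y | x y. x \<in> H i \<and> y \<in> H j}) \<le> card (?Q - {0})"
    using dim_le_card fin by simp
  moreover have "dim (span {x * y | x y. x \<in> H i \<and> y \<in> H j}) = card (B \<times> C)"
    using assms unfolding mult_injective_def
    by (metis card_cartesian_product dim_span_eq_card_independent)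
  moreover have "card (?Q - {0}) \<le> card ?Q" "card ?Q \<le> card (B \<times> C)"
    using fin by (auto intro: card_mono card_image_le)
  ultimately have "card (?Q - {0}) = card ?Q" "card ?Q = card (B \<times> C)" by linarith+
  then show "inj_on (\<lambda>(b, c). b * c) (B \<times> C)"
    using fin by (simp add: inj_on_iff_eq_card)
  show "0 \<notin> ?Q"
  proof
    assume "0 \<in> ?Q"
    then have "card (?Q - {0}) < card ?Q" using fin by (intro card_Diff1_less) auto
    then show False using \<open>card (?Q - {0}) = card ?Q\<close> by simp
  qed
qed

lemma mult_injective_dim_le_1:
  assumes "mult_injective scale H i i"
  shows "dim (H i) \<le> 1"
proof -
  obtain B where "{} \<subseteq> B" and B: "independent B" "span B = H i" "finite B" "card B = dim (H i)"
    by (rule basis_extension_H[OF independent_empty empty_subsetI])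
  have inj: "inj_on (\<lambda>(b, c). b * c) (B \<times> B)"
    by (rule mult_injective_products_of_bases(1)[OF assms B(1,2) B(1,2)])
  have B_trivial: "u = v" if "u \<in> B" "v \<in> B" for u v
  proof -
    have "(\<lambda>(b, c). b * c) (u, v) = (\<lambda>(b, c). b * c) (v, u)" by (simp add: mult.commute)
    then have "(u, v) = (v, u)" by (rule inj_onD[OF inj]) (use that in auto)
    then show ?thesis by (metis fst_conv)
  qed
  have "card B \<le> Suc 0" unfolding card_le_Suc0_iff_eq[OF B(3)] using B_trivial by blast
  then show ?thesis using B(4) by simp
qed

lemma mult_injective_mult_nonzero:
  assumes "mult_injective scale H i j" "u \<in> H i" "v \<in> H j" "u \<noteq> 0" "v \<noteq> 0"
  shows "u * v \<noteq> 0"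
proof -
  obtain B where "u \<in> B" "independent B" "span B = H i"
    using basis_extension_H[of "{u}" i] assms by auto
  moreover obtain C where "v \<in> C" "independent C" "span C = H j"
    using basis_extension_H[of "{v}" j] assms by auto
  ultimately have "(\<lambda>(b, c). b * c) (u, v) \<notin> {0}"
    using mult_injective_products_of_bases(2)[OF assms(1)] by (metis SigmaI imageI singletonD)
  then show ?thesis by simp
qed

lemma powers_independent:
  assumes "x \<in> H d" "0 < d" "\<forall>k<p. x ^ k \<noteq> 0" "(\<Sum>k<p. scale (c k) (x ^ k)) = 0"
  shows "\<forall>k<p. c k = 0"
proof -
  define F where "F j = scale (c (j div d)) (x ^ (j div d))" for j
  have inj: "inj_on (\<lambda>k. k * d) {..<p}" using \<open>0 < d\<close> by (auto simp: inj_on_def)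
  have F_mem: "F j \<in> H j" if "j \<in> (\<lambda>k. k * d) ` {..<p}" for j
    using that power_mem_H[OF assms(1)] \<open>0 < d\<close> unfolding F_def by (auto intro: scale_mem_H)
  have "sum F ((\<lambda>k. k * d) ` {..<p}) = 0"
    using assms(2,4) by (simp add: sum.reindex[OF inj] F_def)
  then have "F (k * d) = 0" if "k < p" for k
    using homogeneous_sum_eq_0[OF _ F_mem] that by blast
  then show ?thesis using assms(2,3) unfolding F_def by simp
qed

lemma poly_eval_surj:
  assumes "\<And>i y. y \<in> H i \<Longrightarrow> \<exists>k c. y = scale c (x ^ k)"
  shows "\<exists>f. poly_eval scale x f = y"
proof -
  obtain F where F: "\<forall>i. F i \<in> H i" "y = sum F {i. F i \<noteq> 0}"
    using ex1_implies_ex[OF homogeneous_decomposition_unique[of y]] by blast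
  have "F i \<in> range (poly_eval scale x)" for i
  proof -
    obtain k c where "F i = scale c (x ^ k)" using assms F(1) by blast
    then have "F i = poly_eval scale x (monom c k)" by (simp add: poly_eval_monom)
    then show ?thesis by (rule range_eqI)
  qed
  then have "y \<in> range (poly_eval scale x)"
    unfolding F(2) by (intro subspace_sum[OF subspace_range_poly_eval])
  then show ?thesis by auto
qed

end

locale poincare_pairing = graded_algebra scale H
  for scale :: "'k::field \<Rightarrow> 'a::comm_ring_1 \<Rightarrow> 'a" and H +
  fixes m :: nat and \<alpha> :: "'a \<Rightarrow> 'k"
  assumes alpha_linear: "lin_functional scale (H m) \<alpha>"
    and nondegenerate: "\<And>i x. i \<le> m \<Longrightarrow> x \<in> H i \<Longrightarrow> x \<noteq> 0 \<Longrightarrow> \<exists>y\<in>H (m - i). \<alpha> (x * y) \<noteq> 0"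
begin

lemma alpha_add: "x \<in> H m \<Longrightarrow> y \<in> H m \<Longrightarrow> \<alpha> (x + y) = \<alpha> x + \<alpha> y"
  using alpha_linear unfolding lin_functional_def by blast

lemma alpha_scale: "x \<in> H m \<Longrightarrow> \<alpha> (scale c x) = c * \<alpha> x"
  using alpha_linear unfolding lin_functional_def by blast

lemma alpha_zero: "\<alpha> 0 = 0"
  using alpha_scale[OF zero_mem_H, of 0] by simp

lemma dual_nonzero:
  assumes "i \<le> m" "x \<in> H i" "x \<noteq> 0"
  shows "\<exists>y\<in>H (m - i). y \<noteq> 0"
  using nondegenerate[OF assms] alpha_zero by force

lemma mult_mem_top: "i \<le> m \<Longrightarrow> x \<in> H i \<Longrightarrow> y \<in> H (m - i) \<Longrightarrow> x * y \<in> H m"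
  using mult_mem_H[of x i y "m - i"] by simp

lemma pairing_with_generator_eq_0:
  assumes "i \<le> m" "H (m - i) = span {y0}" "x \<in> H i" "\<alpha> (x * y0) = 0"
  shows "x = 0"
proof (rule ccontr)
  assume "x \<noteq> 0"
  then obtain y where "y \<in> H (m - i)" "\<alpha> (x * y) \<noteq> 0" using nondegenerate assms(1,3) by blast
  moreover obtain c where "y = scale c y0" using calculation(1) assms(2) by (auto simp: span_singleton)
  moreover have "x * y0 \<in> H m" using mult_mem_top assms span_base by blast
  ultimately show False using assms(4) by (simp add: scale_mult_right alpha_scale)
qed

lemma mult_nonzero_dual:
  assumes "dim (H (m - i)) \<le> 1" "i \<le> m" "u \<in> H i" "v \<in> H (m - i)" "u \<noteq> 0" "v \<noteq> 0"
  shows "u * v \<noteq> 0"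
proof -
  have "H (m - i) = span {v}" using H_eq_span_singleton assms(1,4,6) by blast
  then have "\<alpha> (u * v) \<noteq> 0" using pairing_with_generator_eq_0 assms(2,3,5) by blast
  then show ?thesis using alpha_zero by auto
qed

lemma dim_le_1_if_dual:
  assumes "i \<le> m" "dim (H (m - i)) \<le> 1"
  shows "dim (H i) \<le> 1"
proof -
  have "\<exists>v. H i \<subseteq> span {v}"
  proof (cases "\<exists>v\<in>H i. v \<noteq> 0")
    case False
    then have "H i \<subseteq> span {0}" by (auto simp: span_singleton)
    then show ?thesis by blast
  next
    case True
    then obtain v where v: "v \<in> H i" "v \<noteq> 0" by blast
    obtain y0 where y0: "y0 \<in> H (m - i)" "\<alpha> (v * y0) \<noteq> 0"
      using nondegenerate[OF assms(1) v] by blast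
    then have "H (m - i) = span {y0}" using H_eq_span_singleton[OF assms(2)] alpha_zero by force
    have "u \<in> span {v}" if "u \<in> H i" for u
    proof -
      define s where "s = - \<alpha> (u * y0) / \<alpha> (v * y0)"
      have "u * y0 \<in> H m" "v * y0 \<in> H m" using mult_mem_top assms(1) that v(1) y0(1) by blast+
      then have "\<alpha> ((u + scale s v) * y0) = \<alpha> (u * y0) + s * \<alpha> (v * y0)"
        by (simp add: distrib_right scale_mult_left alpha_add alpha_scale scale_mem_H)
      also have "\<dots> = 0" using y0(2) unfolding s_def by simp
      finally have "u + scale s v = 0"
        using pairing_with_generator_eq_0 assms(1) \<open>H (m - i) = span {y0}\<close> that v(1)
        by (meson add_mem_H scale_mem_H)
      then have "u = scale (- s) v" by (simp add: add_eq_0_iff)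
      then show ?thesis unfolding span_singleton by blast
    qed
    then show ?thesis by blast
  qed
  then obtain v where "H i \<subseteq> span {v}" by blast
  then have "dim (H i) \<le> card {v}" by (rule dim_le_card) simp
  then show ?thesis by simp
qed

end

locale poincare_low_injective = poincare_pairing scale H "2 * n" \<alpha>
  for scale :: "'k::field \<Rightarrow> 'a::comm_ring_1 \<Rightarrow> 'a" and H n \<alpha> +
  assumes one_neq_zero: "(1::'a) \<noteq> 0"
    and H_vanish: "\<And>i. 2 * n < i \<Longrightarrow> H i = {0}"
    and mult_injective_low: "\<And>i j. i \<le> n \<Longrightarrow> j \<le> n \<Longrightarrow> mult_injective scale H i j"
begin

definition support :: "nat set" where
  "support = {i. \<exists>x\<in>H i. x \<noteq> 0}"

lemma dim_H_le_1: "dim (H i) \<le> 1"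
proof -
  consider "i \<le> n" | "n < i" "i \<le> 2 * n" | "2 * n < i" by linarith
  then show ?thesis
  proof cases
    case 1
    then show ?thesis using mult_injective_dim_le_1 mult_injective_low by blast
  next
    case 2
    then have "dim (H (2 * n - i)) \<le> 1" using mult_injective_dim_le_1 mult_injective_low by simp
    then show ?thesis using dim_le_1_if_dual \<open>i \<le> 2 * n\<close> by blast
  next
    case 3
    then show ?thesis using dim_le_card[of "H i" "{}"] H_vanish by simp
  qed
qed

lemma support_eq_multiples:
  assumes "d \<in> support" "0 < d" "\<And>i. i \<in> support \<Longrightarrow> 0 < i \<Longrightarrow> d \<le> i"
  shows "i \<in> support \<longleftrightarrow> i \<le> 2 * n \<and> d dvd i"
proof (rule symmetric_low_sum_closed_eq_multiples[OF _ _ _ assms])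
  show "0 \<in> support" unfolding support_def using one_mem_H0 one_neq_zero by blast
  show "i \<le> 2 * n \<and> 2 * n - i \<in> support" if "i \<in> support" for i
  proof -
    obtain x where "x \<in> H i" "x \<noteq> 0" using \<open>i \<in> support\<close> unfolding support_def by blast
    moreover from this have "i \<le> 2 * n" using H_vanish[of i] by (cases "2 * n < i") auto
    ultimately show ?thesis using dual_nonzero unfolding support_def by blast
  qed
  show "i + j \<in> support" if "i \<in> support" "j \<in> support" "i \<le> n" "j \<le> n" for i j
    using that mult_injective_mult_nonzero[OF mult_injective_low] mult_mem_H
    unfolding support_def by blast
qed

lemma powers_nonzero:
  assumes x: "x \<in> H d" "x \<noteq> 0" and "0 < d"
    and support: "\<And>i. i \<in> support \<longleftrightarrow> i \<le> 2 * n \<and> d dvd i"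
  shows "k * d \<le> 2 * n \<Longrightarrow> x ^ k \<noteq> 0"
proof (induction k)
  case 0
  then show ?case using one_neq_zero by simp
next
  case (Suc k)
  have "x ^ k \<noteq> 0" "x ^ k \<in> H (k * d)" using Suc power_mem_H[OF x(1)] by auto
  consider "k = 0" | "0 < k" "k * d \<le> n" | "0 < k" "n < k * d" by linarith
  then show ?case
  proof cases
    case 1
    then show ?thesis using x by simp
  next
    case 2
    have "d \<le> k * d" using \<open>0 < k\<close> by simp
    then have "d \<le> n" using \<open>k * d \<le> n\<close> by linarith
    with 2 have "x ^ k * x \<noteq> 0"
      using mult_injective_mult_nonzero[OF mult_injective_low \<open>x ^ k \<in> H (k * d)\<close> x(1) \<open>x ^ k \<noteq> 0\<close> x(2)]
      by simp
    then show ?thesis by (simp add: mult.commute)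
  next
    case 3
    txt \<open>Above degree \<open>n\<close> injectivity is not available: pair \<open>x\<^sup>k\<close> instead with \<open>w x\<close>, where \<open>w\<close> is
      a nonzero class of degree \<open>2n - (k + 1) d < n\<close>.\<close>
    have "Suc k * d \<in> support" using Suc.prems support by simp
    then obtain w where w: "w \<in> H (2 * n - Suc k * d)" "w \<noteq> 0"
      using dual_nonzero Suc.prems unfolding support_def by blast
    have "d \<le> n" using 3 Suc.prems by (cases k) auto
    then have "w * x \<noteq> 0"
      using mult_injective_mult_nonzero[OF mult_injective_low w(1) x(1) w(2) x(2)] 3 by simp
    moreover have "w * x \<in> H (2 * n - k * d)"
      using mult_mem_H[OF w(1) x(1)] Suc.prems by (simp add: add.commute)
    ultimately have "x ^ k * (w * x) \<noteq> 0"
      using mult_nonzero_dual[OF dim_H_le_1 _ \<open>x ^ k \<in> H (k * d)\<close>] \<open>x ^ k \<noteq> 0\<close> Suc.prems by simp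
    then show ?thesis by (auto simp: ac_simps)
  qed
qed

lemma powers_span_H:
  assumes x: "x \<in> H d" "x \<noteq> 0" and "0 < d"
    and support: "\<And>i. i \<in> support \<longleftrightarrow> i \<le> 2 * n \<and> d dvd i"
    and "y \<in> H i"
  shows "\<exists>k c. y = scale c (x ^ k)"
proof (cases "y = 0")
  case True
  then show ?thesis by (intro exI[of _ 0]) simp
next
  case False
  then have "i \<le> 2 * n" "d dvd i" using \<open>y \<in> H i\<close> support unfolding support_def by blast+
  then obtain k where "i = k * d" "k * d \<le> 2 * n" by (metis dvdE mult.commute)
  then have "H i = span {x ^ k}"
    using H_eq_span_singleton[OF dim_H_le_1] power_mem_H[OF x(1)] powers_nonzero[OF x \<open>0 < d\<close> support]
    by simp
  then show ?thesis using \<open>y \<in> H i\<close> by (auto simp: span_singleton)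
qed

lemma truncated_power_generator:
  "\<exists>d p x. x \<in> H d \<and> 0 < d \<and> (\<forall>k<p. x ^ k \<noteq> 0) \<and> x ^ p = 0 \<and>
     (\<forall>i. \<forall>y\<in>H i. \<exists>k c. y = scale c (x ^ k))"
proof (cases "\<exists>i\<in>support. 0 < i")
  case False
  txt \<open>Then \<open>H = H\<^sup>0\<close> is a line, presented as \<open>K[x]/(x)\<close> by \<open>x = 0\<close>, taken in degree \<open>1\<close>.\<close>
  have "\<exists>k c. y = scale c ((0::'a) ^ k)" if "y \<in> H i" for i y
  proof (cases "i = 0")
    case True
    then have "\<exists>c. y = scale c 1"
      using that H_eq_span_singleton[OF dim_H_le_1 one_mem_H0 one_neq_zero] by (auto simp: span_singleton)
    then show ?thesis by (metis power_0)
  next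
    case False
    then have "y = 0" using \<open>\<not> (\<exists>i\<in>support. 0 < i)\<close> that unfolding support_def by blast
    then show ?thesis by (metis scale_zero_left)
  qed
  then show ?thesis using zero_mem_H one_neq_zero by (intro exI[of _ 1] exI[of _ 1] exI[of _ 0]) auto
next
  case True
  define d where "d = (LEAST i. i \<in> support \<and> 0 < i)"
  have "d \<in> support" "0 < d" using LeastI_ex[of "\<lambda>i. i \<in> support \<and> 0 < i"] True unfolding d_def by auto
  have least: "d \<le> i" if "i \<in> support" "0 < i" for i unfolding d_def using that by (simp add: Least_le)
  note support = support_eq_multiples[OF \<open>d \<in> support\<close> \<open>0 < d\<close> least]
  obtain x where x: "x \<in> H d" "x \<noteq> 0" using \<open>d \<in> support\<close> unfolding support_def by blast
  define p where "p = 2 * n div d + 1"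
  have "x ^ k \<noteq> 0" if "k < p" for k
  proof -
    have "k * d \<le> 2 * n div d * d" using that unfolding p_def by simp
    also have "\<dots> \<le> 2 * n" by simp
    finally show ?thesis using powers_nonzero[OF x \<open>0 < d\<close> support] by blast
  qed
  moreover have "2 * n < p * d"
    unfolding p_def using \<open>0 < d\<close> by (metis div_mult_mod_eq add_less_cancel_left distrib_right mod_less_divisor mult_1)
  then have "x ^ p = 0" using power_mem_H[OF x(1), of p] H_vanish by simp
  ultimately show ?thesis using x \<open>0 < d\<close> powers_span_H[OF x \<open>0 < d\<close> support] by blast
qed

end

theorem lemma3p8:
  fixes scale :: "'k::field_char_0 \<Rightarrow> 'a::comm_ring_1 \<Rightarrow> 'a"
    and H :: "nat \<Rightarrow> 'a set"
    and n :: nat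
  assumes "fin_graded_algebra scale H"
    and "poincare scale H (2 * n)"
    and "H 0 = range (\<lambda>c. scale c 1)" and "(1::'a) \<noteq> 0"
    and "\<forall>i. (odd i \<or> i > 2 * n) \<longrightarrow> H i = {0}"
    and "\<forall>i j. i \<le> n \<longrightarrow> j \<le> n \<longrightarrow> mult_injective scale H i j"
  shows "\<exists>d p x. x \<in> H d \<and> (\<forall>y. \<exists>f. poly_eval scale x f = y) \<and>
           (\<forall>f. poly_eval scale x f = 0 \<longleftrightarrow> monom 1 p dvd f)"
proof -
  obtain \<alpha> where "lin_functional scale (H (2 * n)) \<alpha>"
    and "\<forall>i\<le>2 * n. \<forall>x\<in>H i. (\<forall>y\<in>H (2 * n - i). \<alpha> (x * y) = 0) \<longrightarrow> x = 0"
    using assms(2) unfolding poincare_def by blast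
  then interpret poincare_low_injective scale H n \<alpha>
    using assms(1,4,5,6) by unfold_locales auto
  obtain d p x where x: "x \<in> H d" "0 < d" "\<forall>k<p. x ^ k \<noteq> 0" "x ^ p = 0"
    and generated: "\<forall>i. \<forall>y\<in>H i. \<exists>k c. y = scale c (x ^ k)"
    using truncated_power_generator by blast
  have "\<exists>f. poly_eval scale x f = y" for y
    using poly_eval_surj generated by blast
  moreover have "poly_eval scale x f = 0 \<longleftrightarrow> monom 1 p dvd f" for f
    using poly_eval_eq_0_iff[OF x(4) powers_independent[OF x(1-3)]] .
  ultimately show ?thesis using x(1) by blast
qed

end
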